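(* Let $\Gamma$ be a basis and $\sigma\in\mathbb{T}$ with $\sigma\neq\omega$ (i.e. $\sigma$ is not equivalent to $\omega$). Then: (1) $\Gamma\vdash x:\sigma$ iff there is $\tau$ with $x:\tau\in\Gamma$ and $\tau\le\sigma$; (2) $\Gamma\vdash\lambda x.M:\sigma$ iff there exist a finite set $I$ and types $(\sigma_i)_{i\in I},(\tau_i)_{i\in I}$ with $\Gamma,x:\sigma_i\vdash M:\tau_i$ for all $i\in I$ and $\bigcap_{i\in I}(\sigma_i\to\tau_i)\le\sigma$; (3) $\Gamma\vdash MN:\sigma$ iff there is $\tau$ with $\Gamma\vdash M:\tau\to\sigma$ and $\Gamma\vdash N:\tau$; (4) $\Gamma\vdash\langle l_i=M_i\mid i\in I\rangle:\sigma$ iff for each $i\in I$ there is $\sigma_i$ with $\Gamma\vdash M_i:\sigma_i$ and $\langle l_i:\sigma_i\mid i\in I\rangle\le\sigma$; (5) $\Gamma\vdash M.l:\sigma$ iff $\Gamma\vdash M:\langle l:\sigma\rangle$; (6) $\Gamma\vdash M\oplus R:\sigma$ iff there exist $\rho_1,\rho_2$ with $\Gamma\vdash M:\rho_1$, $\Gamma\vdash R:\rho_2$, $\mathit{lbl}(R)=\mathit{lbl}(\rho_2)$ and $\rho_1+\rho_2\le\sigma$.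
   Context: \textbf{Terms.} $\Lambda_R\ni M,N ::= x\mid\lambda x.M\mid MN\mid M.l\mid R\mid M\oplus R$, records $R ::= \langle l_i=M_i\mid i\in I\rangle$ ($I$ finite, labels pairwise distinct), $\mathit{lbl}(\langle l_i=M_i\mid i\in I\rangle)=\{l_i\mid i\in I\}$. \textbf{Types.} $\mathbb{T}\ni\sigma ::= a\mid\omega\mid\sigma_1\to\sigma_2\mid\sigma_1\cap\sigma_2\mid\rho$, $\mathbb{T}_R\ni\rho ::= \langle\rangle\mid\langle l:\sigma\rangle\mid\rho_1+\rho_2\mid\rho_1\cap\rho_2$. Subtyping $\le$: least preorder with $\sigma\le\omega$; $\omega\le\omega\to\omega$; $\sigma\cap\tau\le\sigma,\tau$; $\sigma\le\tau_1,\sigma\le\tau_2\Rightarrow\sigma\le\tau_1\cap\tau_2$; $(\sigma\to\tau_1)\cap(\sigma\to\tau_2)\le\sigma\to\tau_1\cap\tau_2$; $\sigma_2\le\sigma_1,\tau_1\le\tau_2\Rightarrow\sigma_1\to\tau_1\le\sigma_2\to\tau_2$; $\langle l:\sigma\rangle\le\langle\rangle$; $\langle l:\sigma\rangle\cap\langle l:\tau\rangle\le\langle l:\sigma\cap\tau\rangle$; $\sigma\le\tau\Rightarrow\langle l:\sigma\rangle\le\langle l:\tau\rangle$; $\rho+\langle\rangle=\langle\rangle+\rho=\rho$; $(\rho_1+\rho_2)+\rho_3=\rho_1+(\rho_2+\rho_3)$; $(\rho_1\cap\rho_2)+\rho_3=(\rho_1+\rho_3)\cap(\rho_2+\rho_3)$;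 $\langle l:\sigma\rangle+(\langle l:\tau\rangle\cap\rho)=\langle l:\tau\rangle\cap\rho$; $\langle l:\sigma\rangle+(\langle l':\tau\rangle\cap\rho)=\langle l':\tau\rangle\cap(\langle l:\sigma\rangle+\rho)$ if $l\neq l'$; $\rho_1\le\rho_2\Rightarrow\rho_1+\rho\le\rho_2+\rho$; $\rho_1=\rho_2\Rightarrow\rho+\rho_1=\rho+\rho_2$ ($=$ is $\le$ both ways). Notation $\langle l_i:\sigma_i\mid i\in I\rangle=\bigcap_{i\in I}\langle l_i:\sigma_i\rangle$ ($\langle\rangle$ if $I=\emptyset$). $\mathit{lbl}(\langle\rangle)=\emptyset$, $\mathit{lbl}(\langle l:\sigma\rangle)=\{l\}$, $\mathit{lbl}(\rho_1\cap\rho_2)=\mathit{lbl}(\rho_1+\rho_2)=\mathit{lbl}(\rho_1)\cup\mathit{lbl}(\rho_2)$. \textbf{Type assignment.} A basis is a finite set of $x:\sigma$ with distinct variables; $\Gamma,x:\sigma$ presupposes $x\notin\mathrm{dom}(\Gamma)$. Rules: $\Gamma\vdash x:\sigma$ if $x:\sigma\in\Gamma$; from $\Gamma,x:\sigma\vdash M:\tau$ infer $\Gamma\vdash\lambda x.M:\sigma\to\tau$; from $\Gamma\vdash M:\sigma\to\tau$, $\Gamma\vdash N:\sigma$ infer $\Gamma\vdash MN:\tau$; $\cap$-introduction; $\Gamma\vdash M:\omega$; subsumption along $\le$; $\Gamma\vdash\langle l_i=M_i\mid i\in I\rangle:\langle\rangle$; from $\Gamma\vdash M_k:\sigma$, $k\in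 I$ infer $\Gamma\vdash\langle l_i=M_i\mid i\in I\rangle:\langle l_k:\sigma\rangle$; from $\Gamma\vdash M:\langle l:\sigma\rangle$ infer $\Gamma\vdash M.l:\sigma$; from $\Gamma\vdash M:\rho_1$, $\Gamma\vdash R:\rho_2$, $\mathit{lbl}(R)=\mathit{lbl}(\rho_2)$ infer $\Gamma\vdash M\oplus R:\rho_1+\rho_2$. *)

theory Defs
  imports Main
begin

type_synonym var = nat
type_synonym label = nat
type_synonym atom = nat

text \<open>Terms of Lambda_R. A record is a list of (label, term) pairs; its
  well-formedness (pairwise distinct labels) is expressed by rec_wf.\<close>
datatype trm =
    Var var
  | Lam var trm
  | App trm trm
  | Sel trm label
  | Rec "(label \<times> trm) list"
  | Ext trm "(label \<times> trm) list"

definition rec_wf :: "(label \<times> trm) list \<Rightarrow> bool" where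
  "rec_wf fs \<longleftrightarrow> distinct (map fst fs)"

definition lbl_rec :: "(label \<times> trm) list \<Rightarrow> label set" where
  "lbl_rec fs = set (map fst fs)"

text \<open>Raw type syntax: one datatype; the sorts T and T_R are carved out by
  the predicates wf_ty and is_rec.  An intersection of two record types is
  itself a record type.\<close>
datatype ty =
    TVar atom
  | Omega
  | Arr ty ty
  | Inter ty ty
  | REmpty
  | RField label ty
  | RPlus ty ty

inductive wf_ty :: "ty \<Rightarrow> bool" and is_rec :: "ty \<Rightarrow> bool" where
  "wf_ty (TVar a)"
| "wf_ty Omega"
| "wf_ty s \<Longrightarrow> wf_ty t \<Longrightarrow> wf_ty (Arr s t)"
| "wf_ty s \<Longrightarrow> wf_ty t \<Longrightarrow> wf_ty (Inter s t)"
| "is_rec r \<Longrightarrow> wf_ty r"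
| "is_rec REmpty"
| "wf_ty s \<Longrightarrow> is_rec (RField l s)"
| "is_rec r1 \<Longrightarrow> is_rec r2 \<Longrightarrow> is_rec (RPlus r1 r2)"
| "is_rec r1 \<Longrightarrow> is_rec r2 \<Longrightarrow> is_rec (Inter r1 r2)"

fun lbl_ty :: "ty \<Rightarrow> label set" where
  "lbl_ty REmpty = {}"
| "lbl_ty (RField l s) = {l}"
| "lbl_ty (Inter r1 r2) = lbl_ty r1 \<union> lbl_ty r2"
| "lbl_ty (RPlus r1 r2) = lbl_ty r1 \<union> lbl_ty r2"
| "lbl_ty _ = {}"

text \<open>Subtyping: the least preorder on T closed under the listed rules.
  Equations rho = rho' are rendered as two inequalities.\<close>
inductive sub :: "ty \<Rightarrow> ty \<Rightarrow> bool" (infix "\<le>\<^sub>T" 50) where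
  refl: "wf_ty s \<Longrightarrow> s \<le>\<^sub>T s"
| trans: "s \<le>\<^sub>T t \<Longrightarrow> t \<le>\<^sub>T u \<Longrightarrow> s \<le>\<^sub>T u"
| top: "wf_ty s \<Longrightarrow> s \<le>\<^sub>T Omega"
| omega_arr: "Omega \<le>\<^sub>T Arr Omega Omega"
| inter_l: "wf_ty s \<Longrightarrow> wf_ty t \<Longrightarrow> Inter s t \<le>\<^sub>T s"
| inter_r: "wf_ty s \<Longrightarrow> wf_ty t \<Longrightarrow> Inter s t \<le>\<^sub>T t"
| inter_glb: "s \<le>\<^sub>T t1 \<Longrightarrow> s \<le>\<^sub>T t2 \<Longrightarrow> s \<le>\<^sub>T Inter t1 t2"
| arr_inter: "wf_ty s \<Longrightarrow> wf_ty t1 \<Longrightarrow> wf_ty t2 \<Longrightarrow>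
     Inter (Arr s t1) (Arr s t2) \<le>\<^sub>T Arr s (Inter t1 t2)"
| arr: "s2 \<le>\<^sub>T s1 \<Longrightarrow> t1 \<le>\<^sub>T t2 \<Longrightarrow> Arr s1 t1 \<le>\<^sub>T Arr s2 t2"
| field_empty: "wf_ty s \<Longrightarrow> RField l s \<le>\<^sub>T REmpty"
| field_inter: "wf_ty s \<Longrightarrow> wf_ty t \<Longrightarrow>
     Inter (RField l s) (RField l t) \<le>\<^sub>T RField l (Inter s t)"
| field: "s \<le>\<^sub>T t \<Longrightarrow> RField l s \<le>\<^sub>T RField l t"
| plus_empty_r1: "is_rec r \<Longrightarrow> RPlus r REmpty \<le>\<^sub>T r"
| plus_empty_r2: "is_rec r \<Longrightarrow> r \<le>\<^sub>T RPlus r REmpty"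
| plus_empty_l1: "is_rec r \<Longrightarrow> RPlus REmpty r \<le>\<^sub>T r"
| plus_empty_l2: "is_rec r \<Longrightarrow> r \<le>\<^sub>T RPlus REmpty r"
| plus_assoc1: "is_rec r1 \<Longrightarrow> is_rec r2 \<Longrightarrow> is_rec r3 \<Longrightarrow>
     RPlus (RPlus r1 r2) r3 \<le>\<^sub>T RPlus r1 (RPlus r2 r3)"
| plus_assoc2: "is_rec r1 \<Longrightarrow> is_rec r2 \<Longrightarrow> is_rec r3 \<Longrightarrow>
     RPlus r1 (RPlus r2 r3) \<le>\<^sub>T RPlus (RPlus r1 r2) r3"
| plus_distr1: "is_rec r1 \<Longrightarrow> is_rec r2 \<Longrightarrow> is_rec r3 \<Longrightarrow>
     RPlus (Inter r1 r2) r3 \<le>\<^sub>T Inter (RPlus r1 r3) (RPlus r2 r3)"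
| plus_distr2: "is_rec r1 \<Longrightarrow> is_rec r2 \<Longrightarrow> is_rec r3 \<Longrightarrow>
     Inter (RPlus r1 r3) (RPlus r2 r3) \<le>\<^sub>T RPlus (Inter r1 r2) r3"
| plus_same1: "wf_ty s \<Longrightarrow> wf_ty t \<Longrightarrow> is_rec r \<Longrightarrow>
     RPlus (RField l s) (Inter (RField l t) r) \<le>\<^sub>T Inter (RField l t) r"
| plus_same2: "wf_ty s \<Longrightarrow> wf_ty t \<Longrightarrow> is_rec r \<Longrightarrow>
     Inter (RField l t) r \<le>\<^sub>T RPlus (RField l s) (Inter (RField l t) r)"
| plus_diff1: "l \<noteq> l' \<Longrightarrow> wf_ty s \<Longrightarrow> wf_ty t \<Longrightarrow> is_rec r \<Longrightarrow>
     RPlus (RField l s) (Inter (RField l' t) r) \<le>\<^sub>T Inter (RField l' t) (RPlus (RField l s) r)"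
| plus_diff2: "l \<noteq> l' \<Longrightarrow> wf_ty s \<Longrightarrow> wf_ty t \<Longrightarrow> is_rec r \<Longrightarrow>
     Inter (RField l' t) (RPlus (RField l s) r) \<le>\<^sub>T RPlus (RField l s) (Inter (RField l' t) r)"
| plus_mono_l: "r1 \<le>\<^sub>T r2 \<Longrightarrow> is_rec r1 \<Longrightarrow> is_rec r2 \<Longrightarrow> is_rec r \<Longrightarrow>
     RPlus r1 r \<le>\<^sub>T RPlus r2 r"
| plus_cong_r: "r1 \<le>\<^sub>T r2 \<Longrightarrow> r2 \<le>\<^sub>T r1 \<Longrightarrow> is_rec r1 \<Longrightarrow> is_rec r2 \<Longrightarrow> is_rec r \<Longrightarrow>
     RPlus r r1 \<le>\<^sub>T RPlus r r2"

definition ty_eq :: "ty \<Rightarrow> ty \<Rightarrow> bool" where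
  "ty_eq s t \<longleftrightarrow> s \<le>\<^sub>T t \<and> t \<le>\<^sub>T s"

fun inter_arrs :: "(ty \<times> ty) list \<Rightarrow> ty" where
  "inter_arrs [] = Omega"
| "inter_arrs [(s, t)] = Arr s t"
| "inter_arrs ((s, t) # ps) = Inter (Arr s t) (inter_arrs ps)"

fun rec_ty :: "(label \<times> ty) list \<Rightarrow> ty" where
  "rec_ty [] = REmpty"
| "rec_ty [(l, s)] = RField l s"
| "rec_ty ((l, s) # ps) = Inter (RField l s) (rec_ty ps)"

type_synonym basis = "var \<rightharpoonup> ty"

definition is_basis :: "basis \<Rightarrow> bool" where
  "is_basis \<Gamma> \<longleftrightarrow> finite (dom \<Gamma>) \<and> (\<forall>x s. \<Gamma> x = Some s \<longrightarrow> wf_ty s)"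

text \<open>Type assignment. Gamma, x:s is the update Gamma(x := Some s),
  presupposing x not in dom Gamma.\<close>
inductive typing :: "basis \<Rightarrow> trm \<Rightarrow> ty \<Rightarrow> bool" where
  t_var: "\<Gamma> x = Some s \<Longrightarrow> typing \<Gamma> (Var x) s"
| t_lam: "x \<notin> dom \<Gamma> \<Longrightarrow> wf_ty s \<Longrightarrow> typing (\<Gamma>(x \<mapsto> s)) M t \<Longrightarrow> typing \<Gamma> (Lam x M) (Arr s t)"
| t_app: "typing \<Gamma> M (Arr s t) \<Longrightarrow> typing \<Gamma> N s \<Longrightarrow> typing \<Gamma> (App M N) t"
| t_inter: "typing \<Gamma> M s \<Longrightarrow> typing \<Gamma> M t \<Longrightarrow> typing \<Gamma> M (Inter s t)"
| t_omega: "typing \<Gamma> M Omega"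
| t_sub: "typing \<Gamma> M s \<Longrightarrow> s \<le>\<^sub>T t \<Longrightarrow> typing \<Gamma> M t"
| t_rec_empty: "typing \<Gamma> (Rec fs) REmpty"
| t_rec_field: "(l, M) \<in> set fs \<Longrightarrow> typing \<Gamma> M s \<Longrightarrow> typing \<Gamma> (Rec fs) (RField l s)"
| t_sel: "typing \<Gamma> M (RField l s) \<Longrightarrow> typing \<Gamma> (Sel M l) s"
| t_ext: "typing \<Gamma> M r1 \<Longrightarrow> typing \<Gamma> (Rec fs) r2 \<Longrightarrow> is_rec r1 \<Longrightarrow> is_rec r2 \<Longrightarrow>
     lbl_rec fs = lbl_ty r2 \<Longrightarrow> typing \<Gamma> (Ext M fs) (RPlus r1 r2)"

end

theory Submission
  imports Defs
begin

text \<open>Below its root, a typing derivation for a term consists of \<open>\<inter>\<close>-introduction, \<open>\<omega>\<close> and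
  subsumption steps, on top of which stand the syntax-directed rules for the outermost term
  former. Hence a predicate on types that holds for the conclusions of those syntax-directed
  rules and is closed upwards under \<open>\<le>\<close> and under \<open>\<inter>\<close> holds for every type of the term that
  is not above \<open>\<omega>\<close>. Each clause of the theorem is an instance, the right-hand side being the
  predicate. Closure under \<open>\<inter>\<close> is routine except for record extension, where it needs
  \<open>\<rho> + \<rho>\<^sub>1 \<le> \<rho> + \<rho>\<^sub>2\<close> for \<open>\<rho>\<^sub>1 \<le> \<rho>\<^sub>2\<close> with the same labels; this is proved by bringing record
  types into the normal form \<open>\<langle>l\<^sub>i : \<sigma>\<^sub>i\<rangle>\<close>, on which \<open>+\<close> acts field by field.\<close>

section \<open>Well-formed types and subtyping\<close>

declare sub.trans [trans]

lemmas is_rec_imp_wf_ty = wf_ty_is_rec.intros(5)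

lemma wf_Omega [simp]: "wf_ty Omega"
  and is_rec_REmpty [simp]: "is_rec REmpty"
  by (auto intro: wf_ty_is_rec.intros)

lemma not_is_rec [simp]: "\<not> is_rec (TVar a)" "\<not> is_rec Omega" "\<not> is_rec (Arr s t)"
  by (auto elim: wf_ty.cases is_rec.cases)

lemma is_rec_RField_iff [simp]: "is_rec (RField l s) \<longleftrightarrow> wf_ty s"
  and is_rec_Inter_iff [simp]: "is_rec (Inter s t) \<longleftrightarrow> is_rec s \<and> is_rec t"
  and is_rec_RPlus_iff [simp]: "is_rec (RPlus s t) \<longleftrightarrow> is_rec s \<and> is_rec t"
  by (auto elim: wf_ty.cases is_rec.cases intro: wf_ty_is_rec.intros)

lemma wf_REmpty [simp]: "wf_ty REmpty"
  and wf_RField_iff [simp]: "wf_ty (RField l s) \<longleftrightarrow> wf_ty s"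
  and wf_Arr_iff [simp]: "wf_ty (Arr s t) \<longleftrightarrow> wf_ty s \<and> wf_ty t"
  and wf_Inter_iff [simp]: "wf_ty (Inter s t) \<longleftrightarrow> wf_ty s \<and> wf_ty t"
  and wf_RPlus_iff [simp]: "wf_ty (RPlus s t) \<longleftrightarrow> is_rec s \<and> is_rec t"
  by (auto elim: wf_ty.cases is_rec.cases intro: wf_ty_is_rec.intros)

lemma sub_wfD: assumes "s \<le>\<^sub>T t" shows "wf_ty s" "wf_ty t"
  using assms by (induction rule: sub.induct) (auto intro: is_rec_imp_wf_ty)

lemma Inter_mono: "s \<le>\<^sub>T s' \<Longrightarrow> t \<le>\<^sub>T t' \<Longrightarrow> Inter s t \<le>\<^sub>T Inter s' t'"
  by (meson sub.inter_glb sub.inter_l sub.inter_r sub.trans sub_wfD)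

lemma Omega_le_imp_le: "Omega \<le>\<^sub>T s \<Longrightarrow> wf_ty t \<Longrightarrow> t \<le>\<^sub>T s"
  by (meson sub.top sub.trans)

lemma is_rec_le_REmpty: "is_rec r \<Longrightarrow> r \<le>\<^sub>T REmpty"
proof (induction r)
  case (RPlus r1 r2)
  then have "RPlus r1 r2 \<le>\<^sub>T RPlus REmpty r2"
    by (intro sub.plus_mono_l) simp_all
  also have "\<dots> \<le>\<^sub>T r2"
    using RPlus by (intro sub.plus_empty_l1) simp
  also have "\<dots> \<le>\<^sub>T REmpty"
    using RPlus by simp
  finally show ?case .
qed (auto intro: sub.refl sub.field_empty sub.inter_l sub.trans is_rec_imp_wf_ty)

lemma ty_eq_refl: "wf_ty s \<Longrightarrow> ty_eq s s"
  by (simp add: ty_eq_def sub.refl)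

lemma ty_eq_trans [trans]: "ty_eq s t \<Longrightarrow> ty_eq t u \<Longrightarrow> ty_eq s u"
  unfolding ty_eq_def by (meson sub.trans)

lemma ty_eq_Inter: "ty_eq s s' \<Longrightarrow> ty_eq t t' \<Longrightarrow> ty_eq (Inter s t) (Inter s' t')"
  unfolding ty_eq_def by (meson Inter_mono)

lemma ty_eq_RPlus:
  assumes "is_rec r1" "is_rec r1'" "is_rec r2" "is_rec r2'" "ty_eq r1 r1'" "ty_eq r2 r2'"
  shows "ty_eq (RPlus r1 r2) (RPlus r1' r2')"
  using assms unfolding ty_eq_def by (meson sub.plus_mono_l sub.plus_cong_r sub.trans)

lemma Inter_assoc:
  "wf_ty s \<Longrightarrow> wf_ty t \<Longrightarrow> wf_ty u \<Longrightarrow> ty_eq (Inter (Inter s t) u) (Inter s (Inter t u))"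
  unfolding ty_eq_def by (meson sub.inter_glb sub.inter_l sub.inter_r sub.trans wf_Inter_iff)

lemma Inter_left_commute:
  "wf_ty s \<Longrightarrow> wf_ty t \<Longrightarrow> wf_ty u \<Longrightarrow> ty_eq (Inter s (Inter t u)) (Inter t (Inter s u))"
  unfolding ty_eq_def by (meson sub.inter_glb sub.inter_l sub.inter_r sub.trans wf_Inter_iff)

section \<open>Record types in normal form\<close>

fun fields_ty :: "(label \<times> ty) list \<Rightarrow> ty" where
  "fields_ty [] = REmpty"
| "fields_ty ((l, s) # ps) = Inter (RField l s) (fields_ty ps)"

definition wf_fields :: "(label \<times> ty) list \<Rightarrow> bool" where
  "wf_fields ps \<longleftrightarrow> (\<forall>(l, s) \<in> set ps. wf_ty s)"

lemma wf_fields_simps [simp]: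
  "wf_fields []"
  "wf_fields ((l, s) # ps) \<longleftrightarrow> wf_ty s \<and> wf_fields ps"
  "wf_fields (ps @ qs) \<longleftrightarrow> wf_fields ps \<and> wf_fields qs"
  by (auto simp: wf_fields_def)

lemma is_rec_fields_ty [simp]: "wf_fields ps \<Longrightarrow> is_rec (fields_ty ps)"
  by (induction ps rule: fields_ty.induct) auto

lemma wf_fields_ty [simp]: "wf_fields ps \<Longrightarrow> wf_ty (fields_ty ps)"
  by (simp add: is_rec_imp_wf_ty)

lemma lbl_fields_ty [simp]: "lbl_ty (fields_ty ps) = fst ` set ps"
  by (induction ps rule: fields_ty.induct) auto

lemma fields_ty_append:
  "wf_fields ps \<Longrightarrow> wf_fields qs \<Longrightarrow> ty_eq (fields_ty (ps @ qs)) (Inter (fields_ty ps) (fields_ty qs))"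
proof (induction ps rule: fields_ty.induct)
  case 1
  then show ?case
    by (simp add: ty_eq_def sub.inter_glb sub.inter_r is_rec_le_REmpty sub.refl)
next
  case (2 l s ps)
  then have "ty_eq (fields_ty ((l, s) # ps @ qs)) (Inter (RField l s) (Inter (fields_ty ps) (fields_ty qs)))"
    by (simp add: ty_eq_Inter ty_eq_refl)
  also have "ty_eq \<dots> (Inter (fields_ty ((l, s) # ps)) (fields_ty qs))"
    using 2 Inter_assoc[of "RField l s" "fields_ty ps" "fields_ty qs"] by (simp add: ty_eq_def)
  finally show ?case by simp
qed

lemma RPlus_RField_fields_ty_mem:
  "wf_fields ps \<Longrightarrow> wf_ty s \<Longrightarrow> l \<in> fst ` set ps \<Longrightarrow>
   ty_eq (RPlus (RField l s) (fields_ty ps)) (fields_ty ps)"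
proof (induction ps rule: fields_ty.induct)
  case (2 l' t ps)
  show ?case
  proof (cases "l = l'")
    case True
    then show ?thesis
      using 2 by (simp add: ty_eq_def sub.plus_same1 sub.plus_same2)
  next
    case False
    then have "ty_eq (RPlus (RField l s) (fields_ty ((l', t) # ps)))
        (Inter (RField l' t) (RPlus (RField l s) (fields_ty ps)))"
      using 2 by (simp add: ty_eq_def sub.plus_diff1 sub.plus_diff2)
    also have "ty_eq \<dots> (fields_ty ((l', t) # ps))"
      using 2 False by (simp add: ty_eq_Inter ty_eq_refl)
    finally show ?thesis .
  qed
qed simp

lemma RPlus_RField_fields_ty_not_mem:
  "wf_fields ps \<Longrightarrow> wf_ty s \<Longrightarrow> l \<notin> fst ` set ps \<Longrightarrow>
   ty_eq (RPlus (RField l s) (fields_ty ps)) (fields_ty ((l, s) # ps))"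
proof (induction ps rule: fields_ty.induct)
  case 1
  then have "ty_eq (RPlus (RField l s) REmpty) (RField l s)"
    by (simp add: ty_eq_def sub.plus_empty_r1 sub.plus_empty_r2)
  also have "ty_eq \<dots> (Inter (RField l s) REmpty)"
    using 1 by (simp add: ty_eq_def sub.inter_glb sub.inter_l sub.field_empty sub.refl)
  finally show ?case by simp
next
  case (2 l' t ps)
  then have "ty_eq (RPlus (RField l s) (fields_ty ((l', t) # ps)))
      (Inter (RField l' t) (RPlus (RField l s) (fields_ty ps)))"
    by (simp add: ty_eq_def sub.plus_diff1 sub.plus_diff2)
  also have "ty_eq \<dots> (Inter (RField l' t) (fields_ty ((l, s) # ps)))"
    using 2 by (simp add: ty_eq_Inter ty_eq_refl)
  also have "ty_eq \<dots> (fields_ty ((l, s) # (l', t) # ps))"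
    using 2 by (simp add: Inter_left_commute)
  finally show ?case .
qed

lemma RPlus_fields_ty:
  assumes "wf_fields ps" "wf_fields qs"
  shows "\<exists>us. wf_fields us \<and> fst ` set us = fst ` set ps \<union> fst ` set qs
    \<and> ty_eq (RPlus (fields_ty ps) (fields_ty qs)) (fields_ty us)"
  using assms
proof (induction ps rule: fields_ty.induct)
  case 1
  then have "ty_eq (RPlus (fields_ty []) (fields_ty qs)) (fields_ty qs)"
    by (simp add: ty_eq_def sub.plus_empty_l1 sub.plus_empty_l2)
  with 1 show ?case by auto
next
  case (2 l s ps)
  then obtain us where us: "wf_fields us" "fst ` set us = fst ` set ps \<union> fst ` set qs"
      "ty_eq (RPlus (fields_ty ps) (fields_ty qs)) (fields_ty us)"
    by auto
  obtain vs where vs: "wf_fields vs" "fst ` set vs = insert l (fst ` set qs)"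
      "ty_eq (RPlus (RField l s) (fields_ty qs)) (fields_ty vs)"
  proof (cases "l \<in> fst ` set qs")
    case True
    with 2 show thesis
      using RPlus_RField_fields_ty_mem[of qs s l] by (intro that[of qs]) auto
  next
    case False
    with 2 show thesis
      using RPlus_RField_fields_ty_not_mem[of qs s l] by (intro that[of "(l, s) # qs"]) auto
  qed
  have "ty_eq (RPlus (fields_ty ((l, s) # ps)) (fields_ty qs))
      (Inter (RPlus (RField l s) (fields_ty qs)) (RPlus (fields_ty ps) (fields_ty qs)))"
    using 2 by (simp add: ty_eq_def sub.plus_distr1 sub.plus_distr2)
  also have "ty_eq \<dots> (Inter (fields_ty vs) (fields_ty us))"
    using us vs by (simp add: ty_eq_Inter)
  also have "ty_eq \<dots> (fields_ty (vs @ us))"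
    using us vs fields_ty_append[of vs us] by (simp add: ty_eq_def)
  finally show ?case
    using us vs by (intro exI[of _ "vs @ us"]) auto
qed

lemma is_rec_normal_form:
  "is_rec r \<Longrightarrow> \<exists>ps. wf_fields ps \<and> fst ` set ps = lbl_ty r \<and> ty_eq r (fields_ty ps)"
proof (induction r)
  case REmpty
  then show ?case
    by (intro exI[of _ "[]"]) (simp add: ty_eq_refl)
next
  case (RField l s)
  then have "ty_eq (RField l s) (fields_ty [(l, s)])"
    by (simp add: ty_eq_def sub.inter_glb sub.refl sub.field_empty sub.inter_l)
  with RField show ?case
    by (intro exI[of _ "[(l, s)]"]) simp
next
  case (Inter r1 r2)
  then obtain ps qs where ps: "wf_fields ps" "fst ` set ps = lbl_ty r1" "ty_eq r1 (fields_ty ps)"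
    and qs: "wf_fields qs" "fst ` set qs = lbl_ty r2" "ty_eq r2 (fields_ty qs)"
    by auto
  have "ty_eq (Inter r1 r2) (Inter (fields_ty ps) (fields_ty qs))"
    using ps qs by (simp add: ty_eq_Inter)
  also have "ty_eq \<dots> (fields_ty (ps @ qs))"
    using ps qs fields_ty_append[of ps qs] by (simp add: ty_eq_def)
  finally have "ty_eq (Inter r1 r2) (fields_ty (ps @ qs))" .
  with ps qs show ?case
    by (intro exI[of _ "ps @ qs"]) auto
next
  case (RPlus r1 r2)
  then obtain ps qs where ps: "wf_fields ps" "fst ` set ps = lbl_ty r1" "ty_eq r1 (fields_ty ps)"
    and qs: "wf_fields qs" "fst ` set qs = lbl_ty r2" "ty_eq r2 (fields_ty qs)"
    by auto
  obtain us where us: "wf_fields us" "fst ` set us = fst ` set ps \<union> fst ` set qs"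
      "ty_eq (RPlus (fields_ty ps) (fields_ty qs)) (fields_ty us)"
    using RPlus_fields_ty[OF ps(1) qs(1)] by blast
  have "ty_eq (RPlus r1 r2) (RPlus (fields_ty ps) (fields_ty qs))"
    using RPlus.prems ps qs by (simp add: ty_eq_RPlus)
  also have "ty_eq \<dots> (fields_ty us)"
    by (fact us(3))
  finally have "ty_eq (RPlus r1 r2) (fields_ty us)" .
  with ps qs us show ?case
    by (intro exI[of _ us]) auto
qed simp_all

lemma RPlus_RField_fields_ty_mono:
  assumes "wf_fields ps" "wf_fields qs" "wf_ty s" "fields_ty ps \<le>\<^sub>T fields_ty qs"
    and "fst ` set ps = fst ` set qs"
  shows "RPlus (RField l s) (fields_ty ps) \<le>\<^sub>T RPlus (RField l s) (fields_ty qs)"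
proof (cases "l \<in> fst ` set ps")
  case True
  then have "RPlus (RField l s) (fields_ty ps) \<le>\<^sub>T fields_ty ps"
    using assms RPlus_RField_fields_ty_mem[of ps s l] by (simp add: ty_eq_def)
  also have "\<dots> \<le>\<^sub>T fields_ty qs"
    by (fact assms(4))
  also have "\<dots> \<le>\<^sub>T RPlus (RField l s) (fields_ty qs)"
    using True assms RPlus_RField_fields_ty_mem[of qs s l] by (simp add: ty_eq_def)
  finally show ?thesis .
next
  case False
  then have "RPlus (RField l s) (fields_ty ps) \<le>\<^sub>T fields_ty ((l, s) # ps)"
    using assms RPlus_RField_fields_ty_not_mem[of ps s l] by (simp add: ty_eq_def)
  also have "\<dots> \<le>\<^sub>T fields_ty ((l, s) # qs)"
    using assms by (simp add: Inter_mono sub.refl)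
  also have "\<dots> \<le>\<^sub>T RPlus (RField l s) (fields_ty qs)"
    using False assms RPlus_RField_fields_ty_not_mem[of qs s l] by (simp add: ty_eq_def)
  finally show ?thesis .
qed

text \<open>The rules for \<open>+\<close> only rewrite \<open>\<langle>l : \<sigma>\<rangle> + (\<langle>l' : \<tau>\<rangle> \<inter> \<rho>)\<close>, so a single field on the left is
  handled by passing to normal forms on the right.\<close>

lemma RPlus_right_mono:
  "is_rec r \<Longrightarrow> is_rec r1 \<Longrightarrow> is_rec r2 \<Longrightarrow> r1 \<le>\<^sub>T r2 \<Longrightarrow> lbl_ty r1 = lbl_ty r2 \<Longrightarrow>
   RPlus r r1 \<le>\<^sub>T RPlus r r2"
proof (induction r arbitrary: r1 r2)
  case REmpty
  then show ?case
    by (meson sub.plus_empty_l1 sub.plus_empty_l2 sub.trans)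
next
  case (RField l s)
  obtain ps where ps: "wf_fields ps" "fst ` set ps = lbl_ty r1" "ty_eq r1 (fields_ty ps)"
    using RField is_rec_normal_form by blast
  obtain qs where qs: "wf_fields qs" "fst ` set qs = lbl_ty r2" "ty_eq r2 (fields_ty qs)"
    using RField is_rec_normal_form by blast
  have "RPlus (RField l s) r1 \<le>\<^sub>T RPlus (RField l s) (fields_ty ps)"
    using RField ps by (simp add: ty_eq_def sub.plus_cong_r)
  also have "\<dots> \<le>\<^sub>T RPlus (RField l s) (fields_ty qs)"
    using RField ps qs unfolding ty_eq_def
    by (intro RPlus_RField_fields_ty_mono) (auto intro: sub.trans)
  also have "\<dots> \<le>\<^sub>T RPlus (RField l s) r2"
    using RField qs by (simp add: ty_eq_def sub.plus_cong_r)
  finally show ?case .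
next
  case (Inter r r')
  then have "RPlus (Inter r r') r1 \<le>\<^sub>T Inter (RPlus r r1) (RPlus r' r1)"
    by (simp add: sub.plus_distr1)
  also have "\<dots> \<le>\<^sub>T Inter (RPlus r r2) (RPlus r' r2)"
    using Inter by (simp add: Inter_mono)
  also have "\<dots> \<le>\<^sub>T RPlus (Inter r r') r2"
    using Inter by (simp add: sub.plus_distr2)
  finally show ?case .
next
  case (RPlus r r')
  then have "RPlus (RPlus r r') r1 \<le>\<^sub>T RPlus r (RPlus r' r1)"
    by (simp add: sub.plus_assoc1)
  also have "\<dots> \<le>\<^sub>T RPlus r (RPlus r' r2)"
    using RPlus by simp
  also have "\<dots> \<le>\<^sub>T RPlus (RPlus r r') r2"
    using RPlus by (simp add: sub.plus_assoc2)
  finally show ?case .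
qed simp_all

lemma RPlus_mono:
  "is_rec r1 \<Longrightarrow> is_rec r1' \<Longrightarrow> is_rec r2 \<Longrightarrow> is_rec r2' \<Longrightarrow> r1 \<le>\<^sub>T r1' \<Longrightarrow> r2 \<le>\<^sub>T r2' \<Longrightarrow>
   lbl_ty r2 = lbl_ty r2' \<Longrightarrow> RPlus r1 r2 \<le>\<^sub>T RPlus r1' r2'"
  by (meson sub.plus_mono_l RPlus_right_mono sub.trans)

lemma wf_inter_arrs: "\<forall>(s, t) \<in> set ps. wf_ty s \<and> wf_ty t \<Longrightarrow> wf_ty (inter_arrs ps)"
  by (induction ps rule: inter_arrs.induct) auto

lemma inter_arrs_le_Arr:
  "\<forall>(s, t) \<in> set ps. wf_ty s \<and> wf_ty t \<Longrightarrow> (s, t) \<in> set ps \<Longrightarrow> inter_arrs ps \<le>\<^sub>T Arr s t"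
proof (induction ps rule: inter_arrs.induct)
  case (3 s' t' p ps)
  then show ?case
    using wf_inter_arrs[of "p # ps"]
    by (auto intro: sub.inter_l sub.trans[OF sub.inter_r])
qed (auto intro: sub.refl)

lemma le_inter_arrs: "wf_ty r \<Longrightarrow> \<forall>(s, t) \<in> set ps. r \<le>\<^sub>T Arr s t \<Longrightarrow> r \<le>\<^sub>T inter_arrs ps"
  by (induction ps rule: inter_arrs.induct) (auto intro: sub.top sub.inter_glb)

lemma typing_inter_arrs:
  "\<forall>(s, t) \<in> set ps. typing \<Gamma> M (Arr s t) \<Longrightarrow> typing \<Gamma> M (inter_arrs ps)"
  by (induction ps rule: inter_arrs.induct) (auto intro: typing.t_omega typing.t_inter)

lemma inter_arrs_append:
  assumes "\<forall>(s, t) \<in> set (ps @ qs). wf_ty s \<and> wf_ty t"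
  shows "inter_arrs (ps @ qs) \<le>\<^sub>T Inter (inter_arrs ps) (inter_arrs qs)"
  using assms
  by (intro sub.inter_glb le_inter_arrs wf_inter_arrs) (auto intro: inter_arrs_le_Arr[OF assms])

lemma is_rec_rec_ty: "wf_fields ps \<Longrightarrow> is_rec (rec_ty ps)"
  by (induction ps rule: rec_ty.induct) auto

lemma rec_ty_le_RField: "wf_fields ps \<Longrightarrow> (l, s) \<in> set ps \<Longrightarrow> rec_ty ps \<le>\<^sub>T RField l s"
proof (induction ps rule: rec_ty.induct)
  case (3 l' s' p ps)
  then show ?case
    using is_rec_rec_ty[of "p # ps"]
    by (auto intro: sub.inter_l sub.trans[OF sub.inter_r] is_rec_imp_wf_ty)
qed (auto intro: sub.refl)

lemma le_rec_ty:
  "wf_ty r \<Longrightarrow> r \<le>\<^sub>T REmpty \<Longrightarrow> \<forall>(l, s) \<in> set ps. r \<le>\<^sub>T RField l s \<Longrightarrow> r \<le>\<^sub>T rec_ty ps"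
  by (induction ps rule: rec_ty.induct) (auto intro: sub.inter_glb)

lemma typing_rec_ty:
  "typing \<Gamma> M REmpty \<Longrightarrow> \<forall>(l, s) \<in> set ps. typing \<Gamma> M (RField l s) \<Longrightarrow> typing \<Gamma> M (rec_ty ps)"
  by (induction ps rule: rec_ty.induct) (auto intro: typing.t_inter)

lemma wf_fields_zip: "\<forall>i < length ss. wf_ty (ss ! i) \<Longrightarrow> wf_fields (zip ls ss)"
  by (auto simp: wf_fields_def set_zip)

lemma rec_ty_zip_mono:
  assumes "length ss = length ls" "length ts = length ls" "\<forall>i < length ls. ss ! i \<le>\<^sub>T ts ! i"
  shows "rec_ty (zip ls ss) \<le>\<^sub>T rec_ty (zip ls ts)"
proof (rule le_rec_ty)
  have wf: "wf_fields (zip ls ss)"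
    using assms by (intro wf_fields_zip) (auto dest: sub_wfD)
  then show "wf_ty (rec_ty (zip ls ss))" "rec_ty (zip ls ss) \<le>\<^sub>T REmpty"
    by (simp_all add: is_rec_rec_ty is_rec_imp_wf_ty is_rec_le_REmpty)
  show "\<forall>(l, t) \<in> set (zip ls ts). rec_ty (zip ls ss) \<le>\<^sub>T RField l t"
  proof clarify
    fix l t
    assume "(l, t) \<in> set (zip ls ts)"
    then obtain i where i: "i < length ls" "l = ls ! i" "t = ts ! i"
      using assms by (auto simp: set_zip)
    then have "(l, ss ! i) \<in> set (zip ls ss)"
      using assms by (auto simp: set_zip)
    with wf have "rec_ty (zip ls ss) \<le>\<^sub>T RField l (ss ! i)"
      by (rule rec_ty_le_RField)
    also have "\<dots> \<le>\<^sub>T RField l t"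
      using assms i by (simp add: sub.field)
    finally show "rec_ty (zip ls ss) \<le>\<^sub>T RField l t" .
  qed
qed

section \<open>Generation\<close>

lemma is_basis_upd: "is_basis \<Gamma> \<Longrightarrow> wf_ty s \<Longrightarrow> is_basis (\<Gamma>(x \<mapsto> s))"
  unfolding is_basis_def by auto

lemma typing_wf: "typing \<Gamma> M s \<Longrightarrow> is_basis \<Gamma> \<Longrightarrow> wf_ty s"
  by (induction rule: typing.induct)
    (auto simp: is_basis_def is_basis_upd dest: sub_wfD(2))

inductive head_typing :: "basis \<Rightarrow> trm \<Rightarrow> ty \<Rightarrow> bool" where
  "\<Gamma> x = Some s \<Longrightarrow> head_typing \<Gamma> (Var x) s"
| "x \<notin> dom \<Gamma> \<Longrightarrow> wf_ty s \<Longrightarrow> typing (\<Gamma>(x \<mapsto> s)) M t \<Longrightarrow> head_typing \<Gamma> (Lam x M) (Arr s t)"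
| "typing \<Gamma> M (Arr s t) \<Longrightarrow> typing \<Gamma> N s \<Longrightarrow> head_typing \<Gamma> (App M N) t"
| "head_typing \<Gamma> (Rec fs) REmpty"
| "(l, M) \<in> set fs \<Longrightarrow> typing \<Gamma> M s \<Longrightarrow> head_typing \<Gamma> (Rec fs) (RField l s)"
| "typing \<Gamma> M (RField l s) \<Longrightarrow> head_typing \<Gamma> (Sel M l) s"
| "typing \<Gamma> M r1 \<Longrightarrow> typing \<Gamma> (Rec fs) r2 \<Longrightarrow> is_rec r1 \<Longrightarrow> is_rec r2 \<Longrightarrow>
     lbl_rec fs = lbl_ty r2 \<Longrightarrow> head_typing \<Gamma> (Ext M fs) (RPlus r1 r2)"

lemma typing_generation:
  assumes "typing \<Gamma> M \<sigma>" "is_basis \<Gamma>"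
    and head: "\<And>s. head_typing \<Gamma> M s \<Longrightarrow> P s"
    and up: "\<And>s t. P s \<Longrightarrow> s \<le>\<^sub>T t \<Longrightarrow> P t"
    and inter: "\<And>s t. wf_ty s \<Longrightarrow> wf_ty t \<Longrightarrow> P s \<Longrightarrow> P t \<Longrightarrow> P (Inter s t)"
  shows "Omega \<le>\<^sub>T \<sigma> \<or> P \<sigma>"
  using assms(1,2) head
proof (induction rule: typing.induct)
  case (t_inter \<Gamma> M s t)
  then have wf: "wf_ty s" "wf_ty t" and "Omega \<le>\<^sub>T s \<or> P s" "Omega \<le>\<^sub>T t \<or> P t"
    by (auto dest: typing_wf)
  then consider "Omega \<le>\<^sub>T s" "Omega \<le>\<^sub>T t" | "Omega \<le>\<^sub>T s" "P t" | "P s" "Omega \<le>\<^sub>T t" | "P s" "P t"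
    by blast
  then show ?case
  proof cases
    case 1
    then show ?thesis by (simp add: sub.inter_glb)
  next
    case 2
    then have "t \<le>\<^sub>T Inter s t"
      using wf by (simp add: Omega_le_imp_le sub.inter_glb sub.refl)
    with 2 show ?thesis by (blast intro: up)
  next
    case 3
    then have "s \<le>\<^sub>T Inter s t"
      using wf by (simp add: Omega_le_imp_le sub.inter_glb sub.refl)
    with 3 show ?thesis by (blast intro: up)
  qed (simp add: wf inter)
next
  case (t_omega \<Gamma> M)
  then show ?case by (simp add: sub.refl)
next
  case (t_sub \<Gamma> M s t)
  then show ?case by (meson sub.trans up)
qed (blast intro: head_typing.intros)+

lemma typing_Var_iff:
  assumes "is_basis \<Gamma>" "\<not> Omega \<le>\<^sub>T \<sigma>"
  shows "typing \<Gamma> (Var x) \<sigma> \<longleftrightarrow> (\<exists>\<tau>. \<Gamma> x = Some \<tau> \<and> \<tau> \<le>\<^sub>T \<sigma>)"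
proof
  assume "typing \<Gamma> (Var x) \<sigma>"
  then have "Omega \<le>\<^sub>T \<sigma> \<or> (\<exists>\<tau>. \<Gamma> x = Some \<tau> \<and> \<tau> \<le>\<^sub>T \<sigma>)"
  proof (rule typing_generation[OF _ assms(1)])
    fix s
    assume "head_typing \<Gamma> (Var x) s"
    then show "\<exists>\<tau>. \<Gamma> x = Some \<tau> \<and> \<tau> \<le>\<^sub>T s"
      using assms(1) by cases (auto simp: is_basis_def intro: sub.refl)
  qed (auto intro: sub.trans sub.inter_glb)
  with assms(2) show "\<exists>\<tau>. \<Gamma> x = Some \<tau> \<and> \<tau> \<le>\<^sub>T \<sigma>"
    by blast
qed (blast intro: typing.t_var typing.t_sub)

definition arrow_types :: "basis \<Rightarrow> var \<Rightarrow> trm \<Rightarrow> (ty \<times> ty) list \<Rightarrow> bool" where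
  "arrow_types \<Gamma> x M ps \<longleftrightarrow>
     (\<forall>(s, t) \<in> set ps. wf_ty s \<and> wf_ty t \<and> x \<notin> dom \<Gamma> \<and> typing (\<Gamma>(x \<mapsto> s)) M t)"

lemma typing_Lam_iff:
  assumes "is_basis \<Gamma>"
  shows "typing \<Gamma> (Lam x M) \<sigma> \<longleftrightarrow> (\<exists>ps. arrow_types \<Gamma> x M ps \<and> inter_arrs ps \<le>\<^sub>T \<sigma>)"
    (is "_ \<longleftrightarrow> ?lam \<sigma>")
proof
  assume "typing \<Gamma> (Lam x M) \<sigma>"
  then have "Omega \<le>\<^sub>T \<sigma> \<or> ?lam \<sigma>"
  proof (rule typing_generation[OF _ assms])
    show "?lam s" if "head_typing \<Gamma> (Lam x M) s" for s
      using that
    proof cases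
      case (2 \<sigma>\<^sub>1 \<sigma>\<^sub>2)
      then have "wf_ty \<sigma>\<^sub>2"
        using assms by (blast intro: typing_wf is_basis_upd)
      with 2 show ?thesis
        by (intro exI[of _ "[(\<sigma>\<^sub>1, \<sigma>\<^sub>2)]"]) (simp add: arrow_types_def sub.refl)
    qed
    show "?lam t" if "?lam s" "s \<le>\<^sub>T t" for s t
      using that by (blast intro: sub.trans)
    show "?lam (Inter s t)" if "wf_ty s" "wf_ty t" and lam: "?lam s" "?lam t" for s t
    proof -
      obtain ps qs where ps: "arrow_types \<Gamma> x M ps" "inter_arrs ps \<le>\<^sub>T s"
        and qs: "arrow_types \<Gamma> x M qs" "inter_arrs qs \<le>\<^sub>T t"
        using lam by blast
      have "inter_arrs (ps @ qs) \<le>\<^sub>T Inter (inter_arrs ps) (inter_arrs qs)"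
        using ps qs by (intro inter_arrs_append) (auto simp: arrow_types_def)
      also have "\<dots> \<le>\<^sub>T Inter s t"
        using ps qs by (intro Inter_mono)
      finally show ?thesis
        using ps qs by (intro exI[of _ "ps @ qs"]) (auto simp: arrow_types_def)
    qed
  qed
  then show "?lam \<sigma>"
    by (auto simp: arrow_types_def intro: exI[of _ "[]"])
next
  assume "?lam \<sigma>"
  then obtain ps where "arrow_types \<Gamma> x M ps" and ps: "inter_arrs ps \<le>\<^sub>T \<sigma>"
    by blast
  then have "typing \<Gamma> (Lam x M) (inter_arrs ps)"
    by (intro typing_inter_arrs) (auto simp: arrow_types_def intro: typing.t_lam)
  then show "typing \<Gamma> (Lam x M) \<sigma>"
    using ps by (rule typing.t_sub)
qed

lemma typing_App_iff:
  assumes "is_basis \<Gamma>" "\<not> Omega \<le>\<^sub>T \<sigma>"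
  shows "typing \<Gamma> (App M N) \<sigma> \<longleftrightarrow> (\<exists>\<tau>. wf_ty \<tau> \<and> typing \<Gamma> M (Arr \<tau> \<sigma>) \<and> typing \<Gamma> N \<tau>)"
    (is "_ \<longleftrightarrow> ?app \<sigma>")
proof
  assume "typing \<Gamma> (App M N) \<sigma>"
  then have "Omega \<le>\<^sub>T \<sigma> \<or> ?app \<sigma>"
  proof (rule typing_generation[OF _ assms(1)])
    show "?app s" if "head_typing \<Gamma> (App M N) s" for s
      using that by cases (blast dest: typing_wf[OF _ assms(1)])
    show "?app t" if "?app s" "s \<le>\<^sub>T t" for s t
      using that by (blast intro: typing.t_sub sub.arr sub.refl)
  next
    fix s t
    assume wf: "wf_ty s" "wf_ty t" and "?app s" "?app t"
    then obtain \<tau> \<tau>' where \<tau>: "wf_ty \<tau>" "typing \<Gamma> M (Arr \<tau> s)" "typing \<Gamma> N \<tau>"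
      and \<tau>': "wf_ty \<tau>'" "typing \<Gamma> M (Arr \<tau>' t)" "typing \<Gamma> N \<tau>'"
      by blast
    have meet: "wf_ty (Inter \<tau> \<tau>')"
      using \<tau> \<tau>' by simp
    have "typing \<Gamma> M (Arr (Inter \<tau> \<tau>') s)" "typing \<Gamma> M (Arr (Inter \<tau> \<tau>') t)"
      using \<tau> \<tau>' wf by (blast intro: typing.t_sub sub.arr sub.inter_l sub.inter_r sub.refl)+
    then have "typing \<Gamma> M (Arr (Inter \<tau> \<tau>') (Inter s t))"
      using meet wf by (blast intro: typing.t_sub typing.t_inter sub.arr_inter)
    with \<tau> \<tau>' meet show "?app (Inter s t)"
      by (blast intro: typing.t_inter)
  qed
  with assms(2) show "?app \<sigma>"
    by blast
qed (blast intro: typing.t_app)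

definition field_types :: "basis \<Rightarrow> (label \<times> trm) list \<Rightarrow> ty list \<Rightarrow> bool" where
  "field_types \<Gamma> fs ss \<longleftrightarrow> length ss = length fs \<and>
     (\<forall>i < length fs. wf_ty (ss ! i) \<and> typing \<Gamma> (snd (fs ! i)) (ss ! i))"

lemma field_types_wf_fields: "field_types \<Gamma> fs ss \<Longrightarrow> wf_fields (zip (map fst fs) ss)"
  by (simp add: field_types_def wf_fields_zip)

lemma field_types_Omega: "field_types \<Gamma> fs (replicate (length fs) Omega)"
  by (simp add: field_types_def typing.t_omega)

lemma field_types_RField:
  assumes "(l, N) \<in> set fs" "typing \<Gamma> N s" "wf_ty s"
  shows "\<exists>ss. field_types \<Gamma> fs ss \<and> rec_ty (zip (map fst fs) ss) \<le>\<^sub>T RField l s"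
proof -
  obtain j where j: "j < length fs" "fs ! j = (l, N)"
    using assms(1) by (meson in_set_conv_nth)
  define ss where "ss = (replicate (length fs) Omega)[j := s]"
  have ss: "field_types \<Gamma> fs ss"
    using j assms by (auto simp: field_types_def ss_def nth_list_update typing.t_omega)
  have "(l, s) \<in> set (zip (map fst fs) ss)"
    using j by (auto simp: set_zip ss_def intro!: exI[of _ j])
  with ss show ?thesis
    by (blast intro: rec_ty_le_RField field_types_wf_fields)
qed

lemma field_types_Inter:
  assumes ss: "field_types \<Gamma> fs ss" and ts: "field_types \<Gamma> fs ts"
  shows "\<exists>us. field_types \<Gamma> fs us \<and>
    rec_ty (zip (map fst fs) us) \<le>\<^sub>T Inter (rec_ty (zip (map fst fs) ss)) (rec_ty (zip (map fst fs) ts))"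
proof -
  define us where "us = map (\<lambda>i. Inter (ss ! i) (ts ! i)) [0..<length fs]"
  have "field_types \<Gamma> fs us"
    using ss ts by (auto simp: field_types_def us_def intro: typing.t_inter)
  moreover have "rec_ty (zip (map fst fs) us) \<le>\<^sub>T rec_ty (zip (map fst fs) ss)"
    using ss ts by (intro rec_ty_zip_mono) (simp_all add: field_types_def us_def sub.inter_l)
  moreover have "rec_ty (zip (map fst fs) us) \<le>\<^sub>T rec_ty (zip (map fst fs) ts)"
    using ss ts by (intro rec_ty_zip_mono) (simp_all add: field_types_def us_def sub.inter_r)
  ultimately show ?thesis
    by (blast intro: sub.inter_glb)
qed

lemma typing_Rec_rec_ty:
  assumes ss: "field_types \<Gamma> fs ss"
  shows "typing \<Gamma> (Rec fs) (rec_ty (zip (map fst fs) ss))"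
proof (intro typing_rec_ty typing.t_rec_empty ballI, clarify)
  fix l s
  assume "(l, s) \<in> set (zip (map fst fs) ss)"
  then obtain i where i: "i < length fs" "l = fst (fs ! i)" "s = ss ! i"
    using ss by (auto simp: field_types_def set_zip)
  then have "(l, snd (fs ! i)) \<in> set fs"
    by simp
  moreover have "typing \<Gamma> (snd (fs ! i)) s"
    using ss i by (simp add: field_types_def)
  ultimately show "typing \<Gamma> (Rec fs) (RField l s)"
    by (rule typing.t_rec_field)
qed

lemma typing_Rec_iff:
  assumes "is_basis \<Gamma>"
  shows "typing \<Gamma> (Rec fs) \<sigma> \<longleftrightarrow>
    (\<exists>ss. field_types \<Gamma> fs ss \<and> rec_ty (zip (map fst fs) ss) \<le>\<^sub>T \<sigma>)"
    (is "_ \<longleftrightarrow> ?rec \<sigma>")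
proof
  let ?ss\<^sub>0 = "replicate (length fs) Omega"
  have ss\<^sub>0: "field_types \<Gamma> fs ?ss\<^sub>0" "is_rec (rec_ty (zip (map fst fs) ?ss\<^sub>0))"
    by (simp_all add: field_types_Omega field_types_wf_fields is_rec_rec_ty)
  assume "typing \<Gamma> (Rec fs) \<sigma>"
  then have "Omega \<le>\<^sub>T \<sigma> \<or> ?rec \<sigma>"
  proof (rule typing_generation[OF _ assms])
    show "?rec s" if "head_typing \<Gamma> (Rec fs) s" for s
      using that
    proof cases
      case 4
      with ss\<^sub>0 show ?thesis
        by (blast intro: is_rec_le_REmpty)
    next
      case 5
      with assms show ?thesis
        by (blast intro: field_types_RField typing_wf)
    qed
    show "?rec t" if "?rec s" "s \<le>\<^sub>T t" for s t
      using that by (blast intro: sub.trans)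
    show "?rec (Inter s t)" if "wf_ty s" "wf_ty t" "?rec s" "?rec t" for s t
      using that field_types_Inter by (blast intro: sub.trans Inter_mono)
  qed
  with ss\<^sub>0 show "?rec \<sigma>"
    by (blast intro: sub.trans sub.top is_rec_imp_wf_ty)
qed (blast intro: typing_Rec_rec_ty typing.t_sub)

lemma typing_Sel_iff:
  assumes "is_basis \<Gamma>" "\<not> Omega \<le>\<^sub>T \<sigma>"
  shows "typing \<Gamma> (Sel M l) \<sigma> \<longleftrightarrow> typing \<Gamma> M (RField l \<sigma>)"
proof
  assume "typing \<Gamma> (Sel M l) \<sigma>"
  then have "Omega \<le>\<^sub>T \<sigma> \<or> typing \<Gamma> M (RField l \<sigma>)"
  proof (rule typing_generation[OF _ assms(1)])
    show "typing \<Gamma> M (RField l s)" if "head_typing \<Gamma> (Sel M l) s" for s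
      using that by cases
    show "typing \<Gamma> M (RField l t)" if "typing \<Gamma> M (RField l s)" "s \<le>\<^sub>T t" for s t
      using that by (blast intro: typing.t_sub sub.field)
    show "typing \<Gamma> M (RField l (Inter s t))"
      if "wf_ty s" "wf_ty t" "typing \<Gamma> M (RField l s)" "typing \<Gamma> M (RField l t)" for s t
      using that by (blast intro: typing.t_sub typing.t_inter sub.field_inter)
  qed
  with assms(2) show "typing \<Gamma> M (RField l \<sigma>)"
    by blast
qed (rule typing.t_sel)

lemma typing_Ext_iff:
  assumes "is_basis \<Gamma>" "\<not> Omega \<le>\<^sub>T \<sigma>"
  shows "typing \<Gamma> (Ext M fs) \<sigma> \<longleftrightarrow>
    (\<exists>\<rho>1 \<rho>2. is_rec \<rho>1 \<and> is_rec \<rho>2 \<and> typing \<Gamma> M \<rho>1 \<and> typing \<Gamma> (Rec fs) \<rho>2 \<and>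
       lbl_rec fs = lbl_ty \<rho>2 \<and> RPlus \<rho>1 \<rho>2 \<le>\<^sub>T \<sigma>)"
    (is "_ \<longleftrightarrow> ?ext \<sigma>")
proof
  assume "typing \<Gamma> (Ext M fs) \<sigma>"
  then have "Omega \<le>\<^sub>T \<sigma> \<or> ?ext \<sigma>"
  proof (rule typing_generation[OF _ assms(1)])
    show "?ext s" if "head_typing \<Gamma> (Ext M fs) s" for s
      using that by cases (force intro: sub.refl)
    show "?ext t" if "?ext s" "s \<le>\<^sub>T t" for s t
      using that by (blast intro: sub.trans)
  next
    fix s t
    assume "?ext s" "?ext t"
    then obtain \<rho>1 \<rho>2 \<rho>1' \<rho>2' where
      \<rho>: "is_rec \<rho>1" "is_rec \<rho>2" "typing \<Gamma> M \<rho>1" "typing \<Gamma> (Rec fs) \<rho>2"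
        "lbl_rec fs = lbl_ty \<rho>2" "RPlus \<rho>1 \<rho>2 \<le>\<^sub>T s"
      and \<rho>': "is_rec \<rho>1'" "is_rec \<rho>2'" "typing \<Gamma> M \<rho>1'" "typing \<Gamma> (Rec fs) \<rho>2'"
        "lbl_rec fs = lbl_ty \<rho>2'" "RPlus \<rho>1' \<rho>2' \<le>\<^sub>T t"
      by blast
    have "RPlus (Inter \<rho>1 \<rho>1') (Inter \<rho>2 \<rho>2') \<le>\<^sub>T RPlus \<rho>1 \<rho>2"
      using \<rho> \<rho>' by (intro RPlus_mono) (auto intro: sub.inter_l is_rec_imp_wf_ty)
    moreover have "RPlus (Inter \<rho>1 \<rho>1') (Inter \<rho>2 \<rho>2') \<le>\<^sub>T RPlus \<rho>1' \<rho>2'"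
      using \<rho> \<rho>' by (intro RPlus_mono) (auto intro: sub.inter_r is_rec_imp_wf_ty)
    ultimately have "RPlus (Inter \<rho>1 \<rho>1') (Inter \<rho>2 \<rho>2') \<le>\<^sub>T Inter s t"
      using \<rho> \<rho>' by (blast intro: sub.inter_glb sub.trans)
    with \<rho> \<rho>' show "?ext (Inter s t)"
      by (intro exI[of _ "Inter \<rho>1 \<rho>1'"] exI[of _ "Inter \<rho>2 \<rho>2'"]) (auto intro: typing.t_inter)
  qed
  with assms(2) show "?ext \<sigma>"
    by blast
qed (blast intro: typing.t_ext typing.t_sub)

theorem lemma3p14:
  assumes basis: "is_basis \<Gamma>"
    and wf: "wf_ty \<sigma>"
    and not_omega: "\<not> ty_eq \<sigma> Omega"
  shows
    "((typing \<Gamma> (Var x) \<sigma> \<longleftrightarrow> (\<exists>\<tau>. \<Gamma> x = Some \<tau> \<and> \<tau> \<le>\<^sub>T \<sigma>)))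
   \<and> ((typing \<Gamma> (Lam x M) \<sigma> \<longleftrightarrow>
       (\<exists>ps. (\<forall>(s, t) \<in> set ps. wf_ty s \<and> wf_ty t \<and> x \<notin> dom \<Gamma> \<and> typing (\<Gamma>(x \<mapsto> s)) M t)
             \<and> inter_arrs ps \<le>\<^sub>T \<sigma>)))
   \<and> ((typing \<Gamma> (App M N) \<sigma> \<longleftrightarrow> (\<exists>\<tau>. wf_ty \<tau> \<and> typing \<Gamma> M (Arr \<tau> \<sigma>) \<and> typing \<Gamma> N \<tau>)))
   \<and> (rec_wf fs \<longrightarrow>
     (typing \<Gamma> (Rec fs) \<sigma> \<longleftrightarrow>
       (\<exists>ss. length ss = length fs \<and>
             (\<forall>i < length fs. wf_ty (ss ! i) \<and> typing \<Gamma> (snd (fs ! i)) (ss ! i)) \<and>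
             rec_ty (zip (map fst fs) ss) \<le>\<^sub>T \<sigma>)))
   \<and> ((typing \<Gamma> (Sel M l) \<sigma> \<longleftrightarrow> typing \<Gamma> M (RField l \<sigma>)))
   \<and> (rec_wf fs \<longrightarrow>
     (typing \<Gamma> (Ext M fs) \<sigma> \<longleftrightarrow>
       (\<exists>\<rho>1 \<rho>2. is_rec \<rho>1 \<and> is_rec \<rho>2 \<and> typing \<Gamma> M \<rho>1 \<and> typing \<Gamma> (Rec fs) \<rho>2 \<and>
                 lbl_rec fs = lbl_ty \<rho>2 \<and> RPlus \<rho>1 \<rho>2 \<le>\<^sub>T \<sigma>)))"
proof -
  have not_above_Omega: "\<not> Omega \<le>\<^sub>T \<sigma>"
    using not_omega sub.top[OF wf] by (simp add: ty_eq_def)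
  note Var = typing_Var_iff[OF basis not_above_Omega, of x]
    and Lam = typing_Lam_iff[OF basis, of x M \<sigma>]
    and App = typing_App_iff[OF basis not_above_Omega, of M N]
    and Rec = typing_Rec_iff[OF basis, of fs \<sigma>]
    and Sel = typing_Sel_iff[OF basis not_above_Omega, of M l]
    and Ext = typing_Ext_iff[OF basis not_above_Omega, of M fs]
  show ?thesis
    unfolding Var Lam App Rec Sel Ext arrow_types_def field_types_def by blast
qed

end
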